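(* Let $X_1,X_2,B_1,B_2$ be topological spaces with continuous maps $f\colon X_1\to X_2$, $r_1\colon X_1\to B_1$, $r_2\colon X_2\to B_2$, $f_0\colon B_1\to B_2$ such that $r_2\circ f=f_0\circ r_1$. Assume $B_1$ and $B_2$ are locally compact Hausdorff and $f_0$ is proper. Then there is a unique continuous map $\tilde f\colon\beta_{B_1}X_1\to\beta_{B_2}X_2$ such that $\tilde f\circ i_1=i_2\circ f$ and $\beta_{B_2}r_2\circ\tilde f=f_0\circ\beta_{B_1}r_1$.
   Context: For a locally compact Hausdorff space $B$ and a space $X$ with continuous $r\colon X\to B$, let $H_X\subseteq\mathrm{C_b}(X)$ be the closed linear span of products $g\cdot(h\circ r)$, $g\in\mathrm{C_b}(X)$, $h\in\mathrm C_0(B)$. The relative Stone--Čech compactification $\beta_BX$ is the spectrum of the commutative C*-algebra $H_X$; $i\colon X\to\beta_BX$ sends $x$ to evaluation at $x$; $\beta_Br\colon\beta_BX\to B$ is the unique continuous map with $\beta_Br\circ i=r$. Here $i_j\colon X_j\to\beta_{B_j}X_j$ denote the canonical maps for $(X_j,r_j)$. *)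

theory Defs
  imports "HOL-Analysis.Analysis"
begin

definition Cb :: "'a topology \<Rightarrow> ('a \<Rightarrow> complex) set" where
  "Cb X = {g. continuous_map X euclidean g \<and> bounded (g ` topspace X) \<and>
              (\<forall>x. x \<notin> topspace X \<longrightarrow> g x = 0)}"

definition C0 :: "'b topology \<Rightarrow> ('b \<Rightarrow> complex) set" where
  "C0 B = {h. continuous_map B euclidean h \<and>
              (\<forall>e>0. \<exists>K. compactin B K \<and> (\<forall>y\<in>topspace B - K. norm (h y) < e))}"

inductive_set lin_span :: "('a \<Rightarrow> complex) set \<Rightarrow> ('a \<Rightarrow> complex) set" for S where
  zero: "(\<lambda>x. 0) \<in> lin_span S"
| base: "g \<in> S \<Longrightarrow> g \<in> lin_span S"
| add: "g \<in> lin_span S \<Longrightarrow> k \<in> lin_span S \<Longrightarrow> (\<lambda>x. g x + k x) \<in> lin_span S"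
| smult: "g \<in> lin_span S \<Longrightarrow> (\<lambda>x. c * g x) \<in> lin_span S"

definition HX :: "'a topology \<Rightarrow> 'b topology \<Rightarrow> ('a \<Rightarrow> 'b) \<Rightarrow> ('a \<Rightarrow> complex) set" where
  "HX X B r = {g \<in> Cb X. \<forall>e>0. \<exists>p \<in> lin_span {(\<lambda>x. g' x * h (r x)) | g' h. g' \<in> Cb X \<and> h \<in> C0 B}.
                  \<forall>x\<in>topspace X. norm (g x - p x) < e}"

definition characters :: "('a \<Rightarrow> complex) set \<Rightarrow> (('a \<Rightarrow> complex) \<Rightarrow> complex) set" where
  "characters A = {\<phi>. \<phi> \<in> extensional A \<and> (\<exists>a\<in>A. \<phi> a \<noteq> 0) \<and>
     (\<forall>a\<in>A. \<forall>b\<in>A. \<phi> (\<lambda>x. a x + b x) = \<phi> a + \<phi> b \<and> \<phi> (\<lambda>x. a x * b x) = \<phi> a * \<phi> b) \<and>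
     (\<forall>c. \<forall>a\<in>A. \<phi> (\<lambda>x. c * a x) = c * \<phi> a)}"

definition spectrum_top :: "('a \<Rightarrow> complex) set \<Rightarrow> (('a \<Rightarrow> complex) \<Rightarrow> complex) topology" where
  "spectrum_top A = subtopology (product_topology (\<lambda>_. euclidean) A) (characters A)"

definition rel_beta :: "'a topology \<Rightarrow> 'b topology \<Rightarrow> ('a \<Rightarrow> 'b) \<Rightarrow> (('a \<Rightarrow> complex) \<Rightarrow> complex) topology" where
  "rel_beta X B r = spectrum_top (HX X B r)"

definition rel_i :: "'a topology \<Rightarrow> 'b topology \<Rightarrow> ('a \<Rightarrow> 'b) \<Rightarrow> 'a \<Rightarrow> (('a \<Rightarrow> complex) \<Rightarrow> complex)" where
  "rel_i X B r x = restrict (\<lambda>g. g x) (HX X B r)"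

definition rel_beta_map :: "'a topology \<Rightarrow> 'b topology \<Rightarrow> ('a \<Rightarrow> 'b) \<Rightarrow> (('a \<Rightarrow> complex) \<Rightarrow> complex) \<Rightarrow> 'b" where
  "rel_beta_map X B r = (THE q. continuous_map (rel_beta X B r) B q \<and>
      (\<forall>x\<in>topspace X. q (rel_i X B r x) = r x) \<and> q \<in> extensional (topspace (rel_beta X B r)))"

definition proper_preimage :: "'a topology \<Rightarrow> 'b topology \<Rightarrow> ('a \<Rightarrow> 'b) \<Rightarrow> bool" where
  "proper_preimage S T f \<longleftrightarrow> (\<forall>K. compactin T K \<longrightarrow> compactin S {x \<in> topspace S. f x \<in> K})"

end

theory Submission
  imports Defs
begin

(*
  A character \<phi> of H_X behaves like a point. It is a weak-* limit of point evaluations: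
  otherwise finitely many g \<in> H_X would keep D = \<Sum>\<^sub>g |g - \<phi> g|^2 bounded below on X, and a
  unit u (\<phi> u = 1) would decompose as \<Sum>\<^sub>g (g - \<phi> g) * u * cnj (g - \<phi> g) / D, which \<phi> kills.
  It also lies over a unique point b of B, i.e. \<phi> (a * (h \<circ> r)) = \<phi> a * h b for all h \<in> C_0(B),
  and b = \<beta>_B r (\<phi>); existence is a compactness argument, since u vanishes at infinity along r.

  Pulling back along f maps H_{X_2} into H_{X_1}, because h \<circ> f_0 vanishes at infinity when f_0 is
  proper. The dual map \<phi> \<mapsto> \<phi> \<circ> f^*, where f^* g = g \<circ> f, is then weak-* continuous,
  extends f and lies over f_0; it is unique since the point evaluations are dense and the spectrum
  is Hausdorff.
*)

lemma continuous_map_mult_normed: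
  fixes f g :: "'a \<Rightarrow> 'b::real_normed_algebra"
  shows "continuous_map X euclidean f \<Longrightarrow> continuous_map X euclidean g
    \<Longrightarrow> continuous_map X euclidean (\<lambda>x. f x * g x)"
  by (simp add: continuous_map_atin tendsto_mult)

lemma continuous_map_divide_field:
  fixes f g :: "'a \<Rightarrow> 'b::real_normed_field"
  shows "continuous_map X euclidean f \<Longrightarrow> continuous_map X euclidean g
    \<Longrightarrow> (\<And>x. x \<in> topspace X \<Longrightarrow> g x \<noteq> 0) \<Longrightarrow> continuous_map X euclidean (\<lambda>x. f x / g x)"
  by (simp add: continuous_map_atin tendsto_divide)

lemma continuous_map_cnj:
  "continuous_map X euclidean f \<Longrightarrow> continuous_map X euclidean (\<lambda>x. cnj (f x))"
  by (simp add: continuous_map_atin tendsto_cnj)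

lemma continuous_map_of_real:
  "continuous_map X euclideanreal f \<Longrightarrow> continuous_map X euclidean (\<lambda>x. of_real (f x) :: 'b::real_normed_algebra_1)"
  by (simp add: continuous_map_atin tendsto_of_real)

lemma finite_pos_lower_bound:
  fixes \<eta> :: "'a \<Rightarrow> real"
  assumes "finite F" "\<forall>i\<in>F. 0 < \<eta> i"
  shows "\<exists>e>0. \<forall>i\<in>F. e \<le> \<eta> i"
  using assms by (intro exI[of _ "Min (insert 1 (\<eta> ` F))"]) (auto simp: Min_gr_iff)

lemma compactin_finite_subcover_uniform:
  assumes K: "compactin B K"
    and nbhd: "\<forall>b\<in>K. \<exists>U (\<eta>::real). openin B U \<and> b \<in> U \<and> \<eta> > 0 \<and> P b U \<eta>"
  shows "\<exists>Bs U \<eta> e. finite Bs \<and> Bs \<subseteq> K \<and> K \<subseteq> (\<Union>b\<in>Bs. U b) \<and> e > 0 \<and>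
           (\<forall>b\<in>Bs. e \<le> \<eta> b \<and> P b (U b) (\<eta> b))"
proof -
  from bchoice[OF nbhd] obtain U where "\<forall>b\<in>K. \<exists>\<eta>. openin B (U b) \<and> b \<in> U b \<and> \<eta> > 0 \<and> P b (U b) \<eta>"
    by (rule exE)
  from bchoice[OF this] obtain \<eta> where U: "\<forall>b\<in>K. openin B (U b) \<and> b \<in> U b \<and> \<eta> b > 0 \<and> P b (U b) (\<eta> b)"
    by (rule exE)
  then have "\<forall>V\<in>U ` K. openin B V" "K \<subseteq> \<Union> (U ` K)"
    by blast+
  then have "\<exists>\<F>. finite \<F> \<and> \<F> \<subseteq> U ` K \<and> K \<subseteq> \<Union> \<F>"
    using K unfolding compactin_def by blast
  then obtain Bs where Bs: "Bs \<subseteq> K" "finite Bs" "K \<subseteq> (\<Union>b\<in>Bs. U b)"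
    by (metis finite_subset_image)
  moreover obtain e where "e > 0" "\<forall>b\<in>Bs. e \<le> \<eta> b"
    using finite_pos_lower_bound[OF Bs(2)] U Bs(1) by blast
  ultimately show ?thesis
    using U by (intro exI[of _ Bs] exI[of _ U] exI[of _ \<eta>] exI[of _ e]) blast
qed

subsection \<open>Bounded continuous functions and functions vanishing at infinity\<close>

lemma Cb_iff:
  "g \<in> Cb X \<longleftrightarrow> continuous_map X euclidean g \<and> (\<exists>M. \<forall>x\<in>topspace X. cmod (g x) \<le> M) \<and>
     (\<forall>x. x \<notin> topspace X \<longrightarrow> g x = 0)"
  unfolding Cb_def bounded_iff by auto

lemma Cb_continuous: "g \<in> Cb X \<Longrightarrow> continuous_map X euclidean g"
  by (simp add: Cb_iff)

lemma Cb_outside: "g \<in> Cb X \<Longrightarrow> x \<notin> topspace X \<Longrightarrow> g x = 0"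
  by (simp add: Cb_iff)

lemma Cb_bounded: "g \<in> Cb X \<Longrightarrow> \<exists>M. \<forall>x\<in>topspace X. cmod (g x) \<le> M"
  by (simp add: Cb_iff)

lemma Cb_restrict:
  assumes "continuous_map X euclidean k" "\<forall>x\<in>topspace X. cmod (k x) \<le> M"
  shows "(\<lambda>x. if x \<in> topspace X then k x else 0) \<in> Cb X"
proof -
  have "continuous_map X euclidean (\<lambda>x. if x \<in> topspace X then k x else 0)"
    using assms(1) by (rule continuous_map_eq) auto
  then show ?thesis
    unfolding Cb_iff using assms(2) by auto
qed

lemma Cb_add:
  assumes "g \<in> Cb X" "k \<in> Cb X"
  shows "(\<lambda>x. g x + k x) \<in> Cb X"
proof -
  obtain M1 M2 where "\<forall>x\<in>topspace X. cmod (g x) \<le> M1" "\<forall>x\<in>topspace X. cmod (k x) \<le> M2"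
    using Cb_bounded assms by metis
  then have "\<forall>x\<in>topspace X. cmod (g x + k x) \<le> M1 + M2"
    by (meson add_mono norm_triangle_le)
  then show ?thesis
    using assms unfolding Cb_iff by (auto intro: continuous_map_add)
qed

lemma Cb_mult:
  assumes "g \<in> Cb X" "k \<in> Cb X"
  shows "(\<lambda>x. g x * k x) \<in> Cb X"
proof -
  obtain M1 M2 where "\<forall>x\<in>topspace X. cmod (g x) \<le> M1" "\<forall>x\<in>topspace X. cmod (k x) \<le> M2"
    using Cb_bounded assms by metis
  then have "\<forall>x\<in>topspace X. cmod (g x * k x) \<le> M1 * M2"
    by (simp add: norm_mult mult_mono')
  then show ?thesis
    using assms unfolding Cb_iff by (auto intro: continuous_map_mult_normed)
qed

lemma C0_continuous: "h \<in> C0 B \<Longrightarrow> continuous_map B euclidean h"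
  by (simp add: C0_def)

lemma C0_vanishing: "h \<in> C0 B \<Longrightarrow> e > 0 \<Longrightarrow> \<exists>K. compactin B K \<and> (\<forall>y\<in>topspace B - K. cmod (h y) < e)"
  unfolding C0_def by blast

lemma C0_bounded:
  assumes "h \<in> C0 B"
  shows "\<exists>M>0. \<forall>y\<in>topspace B. cmod (h y) \<le> M"
proof -
  obtain K where K: "compactin B K" "\<forall>y\<in>topspace B - K. cmod (h y) < 1"
    using C0_vanishing[OF assms zero_less_one] by blast
  have "compact (h ` K)"
    using image_compactin[OF K(1) C0_continuous[OF assms]] by (simp add: compactin_euclidean_iff)
  then obtain M where "\<forall>y\<in>K. cmod (h y) \<le> M"
    by (meson bounded_iff compact_imp_bounded image_eqI)
  then have "\<forall>y\<in>topspace B. cmod (h y) \<le> max M 1"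
    using K(2) by (fastforce intro: max.coboundedI1 max.coboundedI2 less_imp_le)
  then show ?thesis
    by (intro exI[of _ "max M 1"]) auto
qed

text \<open>This is where local compactness of the base is used.\<close>
lemma C0_bump:
  assumes "locally_compact_space B" "Hausdorff_space B" "openin B V" "b \<in> V"
  shows "\<exists>h\<in>C0 B. h b = 1 \<and> (\<forall>y\<in>topspace B - V. h y = 0)"
proof -
  have "regular_space B"
    using assms locally_compact_Hausdorff_imp_regular_space by blast
  then have "neighbourhood_base_of (compactin B) B"
    using assms(1) locally_compact_imp_neighbourhood_base by blast
  then obtain U K where UK: "openin B U" "compactin B K" "b \<in> U" "U \<subseteq> K" "K \<subseteq> V"
    using assms(3,4) unfolding neighbourhood_base_of by metis
  have "completely_regular_space B"
    using locally_compact_regular_imp_completely_regular_space assms(1,2) by blast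
  moreover have "closedin B (topspace B - U)" "b \<in> topspace B - (topspace B - U)"
    using UK(1,3) openin_subset[OF UK(1)] by auto
  ultimately obtain f :: "_ \<Rightarrow> real" where f: "continuous_map B (top_of_set {0..1}) f" "f b = 0"
    "f ` (topspace B - U) \<subseteq> {1}"
    unfolding completely_regular_space_def by blast
  define h where "h y = complex_of_real (1 - f y)" for y
  have "continuous_map B euclidean h"
    using f(1) unfolding h_def continuous_map_in_subtopology
    by (intro continuous_map_of_real continuous_map_diff) auto
  moreover have vanish: "\<forall>y\<in>topspace B - U. h y = 0"
    using f(3) by (auto simp: h_def)
  moreover have "\<forall>y\<in>topspace B - K. cmod (h y) < e" if "e > 0" for e
    using vanish UK(4) that by (metis DiffE DiffI norm_zero subsetD)
  ultimately have "h \<in> C0 B"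
    unfolding C0_def using UK(2) by blast
  moreover have "\<forall>y\<in>topspace B - V. h y = 0"
    using vanish UK(4,5) by blast
  moreover have "h b = 1"
    using f(2) by (simp add: h_def)
  ultimately show ?thesis
    by blast
qed

lemma C0_compose_proper:
  assumes f0: "continuous_map B1 B2 f0" and pr: "proper_preimage B1 B2 f0" and h: "h \<in> C0 B2"
  shows "(\<lambda>y. h (f0 y)) \<in> C0 B1"
proof -
  have "\<exists>K. compactin B1 K \<and> (\<forall>y\<in>topspace B1 - K. cmod (h (f0 y)) < e)" if e: "e > 0" for e
  proof -
    obtain K2 where K2: "compactin B2 K2" "\<forall>y\<in>topspace B2 - K2. cmod (h y) < e"
      using C0_vanishing[OF h e] by blast
    then have "compactin B1 {x \<in> topspace B1. f0 x \<in> K2}"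
      using pr unfolding proper_preimage_def by blast
    moreover have "\<forall>y\<in>topspace B1 - {x \<in> topspace B1. f0 x \<in> K2}. cmod (h (f0 y)) < e"
      using K2(2) continuous_map_funspace[OF f0] by fastforce
    ultimately show ?thesis by blast
  qed
  moreover have "continuous_map B1 euclidean (\<lambda>y. h (f0 y))"
    using continuous_map_compose[OF f0 C0_continuous[OF h]] by (simp add: o_def)
  ultimately show ?thesis
    unfolding C0_def by blast
qed

lemma C0_stays_away_near:
  assumes h: "h \<in> C0 B" and b: "b \<in> topspace B" and c: "c \<noteq> h b"
  shows "\<exists>U \<eta>. openin B U \<and> b \<in> U \<and> \<eta> > 0 \<and>
           (\<forall>y\<in>U. \<forall>z. cmod (z - 1) < \<eta> \<longrightarrow> \<eta> \<le> cmod (z * h y - c))"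
proof -
  define d where "d = cmod (h b - c)"
  obtain M where M: "M > 0" "\<forall>y\<in>topspace B. cmod (h y) \<le> M"
    using C0_bounded[OF h] by blast
  define U where "U = {y \<in> topspace B. cmod (h y - c) \<in> {d / 2<..}}"
  define \<eta> where "\<eta> = d / (4 * (M + 1))"
  have d: "d > 0"
    using c by (simp add: d_def)
  have \<eta>: "\<eta> > 0" "\<eta> * M \<le> d / 4" "\<eta> \<le> d / 4"
    using d M(1) by (simp_all add: \<eta>_def field_simps)
  have "continuous_map B euclideanreal (\<lambda>y. cmod (h y - c))"
    by (intro continuous_map_norm continuous_map_diff C0_continuous[OF h] continuous_map_canonical_const)
  then have "openin B U"
    unfolding U_def by (rule openin_continuous_map_preimage) simp
  moreover have "b \<in> U"
    using b d by (simp add: U_def d_def)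
  moreover have "\<eta> \<le> cmod (z * h y - c)" if y: "y \<in> U" and z: "cmod (z - 1) < \<eta>" for y z
  proof -
    have "cmod (1 - z) * cmod (h y) \<le> \<eta> * M"
      using y z M(2) \<eta>(1) by (intro mult_mono) (auto simp: U_def norm_minus_commute)
    then have "cmod ((1 - z) * h y) \<le> d / 4"
      using \<eta>(2) by (simp add: norm_mult)
    moreover have "cmod (h y - c) \<le> cmod (z * h y - c) + cmod ((1 - z) * h y)"
      using norm_triangle_ineq[of "z * h y - c" "(1 - z) * h y"] by (simp add: algebra_simps)
    moreover have "d / 2 < cmod (h y - c)"
      using y by (simp add: U_def)
    ultimately show ?thesis
      using \<eta>(3) by linarith
  qed
  ultimately show ?thesis
    using \<eta>(1) by blast
qed

subsection \<open>The algebra \<open>H\<^sub>X\<close>\<close>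

definition HX_gens :: "'a topology \<Rightarrow> 'b topology \<Rightarrow> ('a \<Rightarrow> 'b) \<Rightarrow> ('a \<Rightarrow> complex) set" where
  "HX_gens X B r = {(\<lambda>x. g x * h (r x)) | g h. g \<in> Cb X \<and> h \<in> C0 B}"

lemma HX_gensI: "g \<in> Cb X \<Longrightarrow> h \<in> C0 B \<Longrightarrow> (\<lambda>x. g x * h (r x)) \<in> HX_gens X B r"
  unfolding HX_gens_def by blast

lemma HX_iff:
  "a \<in> HX X B r \<longleftrightarrow> a \<in> Cb X \<and>
     (\<forall>e>0. \<exists>p\<in>lin_span (HX_gens X B r). \<forall>x\<in>topspace X. cmod (a x - p x) < e)"
  by (simp add: HX_def HX_gens_def)

lemma HX_Cb: "a \<in> HX X B r \<Longrightarrow> a \<in> Cb X"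
  by (simp add: HX_iff)

lemma HX_approx:
  "a \<in> HX X B r \<Longrightarrow> e > 0 \<Longrightarrow> \<exists>p\<in>lin_span (HX_gens X B r). \<forall>x\<in>topspace X. cmod (a x - p x) < e"
  by (simp add: HX_iff)

lemma lin_span_HX_gens_mult_Cb:
  assumes "p \<in> lin_span (HX_gens X B r)" "k \<in> Cb X"
  shows "(\<lambda>x. p x * k x) \<in> lin_span (HX_gens X B r)"
  using assms(1)
proof induction
  case zero
  then show ?case by (simp add: lin_span.zero)
next
  case (base g)
  then obtain g' h where g: "g = (\<lambda>x. g' x * h (r x))" "g' \<in> Cb X" "h \<in> C0 B"
    unfolding HX_gens_def by blast
  have "(\<lambda>x. (g' x * k x) * h (r x)) \<in> HX_gens X B r"
    using HX_gensI[OF Cb_mult[OF g(2) assms(2)] g(3)] .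
  then show ?case
    unfolding g(1) by (simp add: lin_span.base ac_simps)
next
  case (add g k')
  then show ?case
    using lin_span.add by (simp add: distrib_right)
next
  case (smult g c)
  then show ?case
    using lin_span.smult by (simp add: mult.assoc)
qed

lemma HX_zero: "(\<lambda>x. 0) \<in> HX X B r"
  unfolding HX_iff Cb_iff by (auto intro!: bexI[of _ "\<lambda>x. 0"] lin_span.zero)

lemma HX_add:
  assumes a: "a \<in> HX X B r" and b: "b \<in> HX X B r"
  shows "(\<lambda>x. a x + b x) \<in> HX X B r"
proof -
  have "\<exists>p\<in>lin_span (HX_gens X B r). \<forall>x\<in>topspace X. cmod (a x + b x - p x) < e" if "e > 0" for e
  proof -
    obtain p q where p: "p \<in> lin_span (HX_gens X B r)" "\<forall>x\<in>topspace X. cmod (a x - p x) < e / 2"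
      and q: "q \<in> lin_span (HX_gens X B r)" "\<forall>x\<in>topspace X. cmod (b x - q x) < e / 2"
      using HX_approx[OF a, of "e / 2"] HX_approx[OF b, of "e / 2"] \<open>e > 0\<close> by auto
    have "cmod (a x + b x - (p x + q x)) < e" if "x \<in> topspace X" for x
    proof -
      have "cmod (a x + b x - (p x + q x)) \<le> cmod (a x - p x) + cmod (b x - q x)"
        by (metis add_diff_add norm_triangle_ineq)
      then show ?thesis
        using p(2) q(2) that by fastforce
    qed
    then show ?thesis
      using lin_span.add[OF p(1) q(1)] by (intro bexI[of _ "\<lambda>x. p x + q x"]) auto
  qed
  then show ?thesis
    unfolding HX_iff using Cb_add[OF HX_Cb[OF a] HX_Cb[OF b]] by blast
qed

lemma HX_mult_bounded:
  assumes a: "a \<in> HX X B r" and k: "continuous_map X euclidean k" "\<forall>x\<in>topspace X. cmod (k x) \<le> M"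
  shows "(\<lambda>x. a x * k x) \<in> HX X B r"
proof -
  define k' where "k' x = (if x \<in> topspace X then k x else 0)" for x
  have k': "k' \<in> Cb X"
    unfolding k'_def using Cb_restrict[OF k] .
  have ak: "(\<lambda>x. a x * k x) = (\<lambda>x. a x * k' x)"
    using Cb_outside[OF HX_Cb[OF a]] by (auto simp: k'_def)
  define M' where "M' = max M 0 + 1"
  have M': "M' > 0" "\<forall>x\<in>topspace X. cmod (k' x) \<le> M'"
    using k(2) by (auto simp: M'_def k'_def intro: add_increasing2 max.coboundedI1)
  have "\<exists>p\<in>lin_span (HX_gens X B r). \<forall>x\<in>topspace X. cmod (a x * k' x - p x) < e" if "e > 0" for e
  proof -
    obtain p where p: "p \<in> lin_span (HX_gens X B r)" "\<forall>x\<in>topspace X. cmod (a x - p x) < e / M'"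
      using HX_approx[OF a, of "e / M'"] M'(1) \<open>e > 0\<close> by auto
    have "cmod (a x * k' x - p x * k' x) < e" if "x \<in> topspace X" for x
    proof -
      have "cmod (a x * k' x - p x * k' x) = cmod (a x - p x) * cmod (k' x)"
        by (simp add: norm_mult flip: left_diff_distrib)
      also have "\<dots> \<le> cmod (a x - p x) * M'"
        using M'(2) that by (simp add: mult_left_mono)
      also have "\<dots> < e"
        using p(2) that M'(1) by (simp add: pos_less_divide_eq)
      finally show ?thesis .
    qed
    then show ?thesis
      using lin_span_HX_gens_mult_Cb[OF p(1) k'] by (intro bexI[of _ "\<lambda>x. p x * k' x"]) auto
  qed
  then show ?thesis
    unfolding ak HX_iff using Cb_mult[OF HX_Cb[OF a] k'] by blast
qed

lemma HX_mult:
  assumes a: "a \<in> HX X B r" and b: "b \<in> HX X B r"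
  shows "(\<lambda>x. a x * b x) \<in> HX X B r"
proof -
  obtain M where "\<forall>x\<in>topspace X. cmod (b x) \<le> M"
    using Cb_bounded[OF HX_Cb[OF b]] by blast
  then show ?thesis
    using HX_mult_bounded[OF a Cb_continuous[OF HX_Cb[OF b]]] by blast
qed

lemma HX_scale: "a \<in> HX X B r \<Longrightarrow> (\<lambda>x. c * a x) \<in> HX X B r"
  using HX_mult_bounded[of a X B r "\<lambda>x. c" "cmod c"] by (simp add: mult.commute)

lemma Cb_C0_comp:
  assumes r: "continuous_map X B r" and h: "h \<in> C0 B"
  shows "(\<lambda>x. if x \<in> topspace X then h (r x) else 0) \<in> Cb X"
proof -
  obtain M where "\<forall>y\<in>topspace B. cmod (h y) \<le> M"
    using C0_bounded[OF h] by blast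
  then have "\<forall>x\<in>topspace X. cmod (h (r x)) \<le> M"
    using continuous_map_funspace[OF r] by blast
  moreover have "continuous_map X euclidean (\<lambda>x. h (r x))"
    using continuous_map_compose[OF r C0_continuous[OF h]] by (simp add: o_def)
  ultimately show ?thesis
    using Cb_restrict by blast
qed

lemma HX_C0:
  assumes r: "continuous_map X B r" and h: "h \<in> C0 B"
  shows "(\<lambda>x. if x \<in> topspace X then h (r x) else 0) \<in> HX X B r" (is "?g \<in> _")
proof -
  have "(\<lambda>x. if x \<in> topspace X then 1 else 0) \<in> Cb X"
    using Cb_restrict[of X "\<lambda>x. 1" 1] by simp
  then have "(\<lambda>x. (if x \<in> topspace X then 1 else 0) * h (r x)) \<in> lin_span (HX_gens X B r)"
    using HX_gensI[OF _ h] lin_span.base by blast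
  moreover have "(\<lambda>x. (if x \<in> topspace X then 1 else 0) * h (r x)) = ?g"
    by auto
  ultimately show ?thesis
    unfolding HX_iff using Cb_C0_comp[OF r h] by (auto intro!: bexI[of _ ?g])
qed

lemma HX_mult_C0:
  assumes r: "continuous_map X B r" and a: "a \<in> HX X B r" and h: "h \<in> C0 B"
  shows "(\<lambda>x. a x * h (r x)) \<in> HX X B r"
proof -
  have "(\<lambda>x. a x * h (r x)) = (\<lambda>x. a x * (if x \<in> topspace X then h (r x) else 0))"
    using Cb_outside[OF HX_Cb[OF a]] by auto
  then show ?thesis
    using HX_mult[OF a HX_C0[OF r h]] by simp
qed

definition vanishes_along :: "'a topology \<Rightarrow> 'b topology \<Rightarrow> ('a \<Rightarrow> 'b) \<Rightarrow> ('a \<Rightarrow> complex) \<Rightarrow> bool" where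
  "vanishes_along X B r a \<longleftrightarrow>
     (\<forall>e>0. \<exists>K. compactin B K \<and> (\<forall>x\<in>topspace X. r x \<notin> K \<longrightarrow> cmod (a x) < e))"

lemma vanishes_along_C0:
  assumes r: "continuous_map X B r" and h: "h \<in> C0 B"
  shows "vanishes_along X B r (\<lambda>x. h (r x))"
  unfolding vanishes_along_def
proof (intro allI impI)
  fix e :: real
  assume "e > 0"
  then obtain K where "compactin B K" "\<forall>y\<in>topspace B - K. cmod (h y) < e"
    using C0_vanishing[OF h] by blast
  moreover have "\<forall>x\<in>topspace X. r x \<in> topspace B"
    using continuous_map_funspace[OF r] by auto
  ultimately show "\<exists>K. compactin B K \<and> (\<forall>x\<in>topspace X. r x \<notin> K \<longrightarrow> cmod (h (r x)) < e)"
    by blast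
qed

lemma vanishes_along_mult_bounded:
  assumes a: "vanishes_along X B r a" and k: "\<forall>x\<in>topspace X. cmod (k x) \<le> M"
  shows "vanishes_along X B r (\<lambda>x. k x * a x)"
  unfolding vanishes_along_def
proof (intro allI impI)
  fix e :: real
  assume "e > 0"
  define M' where "M' = max M 0 + 1"
  have M': "M' > 0" "\<forall>x\<in>topspace X. cmod (k x) \<le> M'"
    using k by (auto simp: M'_def intro: add_increasing2 max.coboundedI1)
  obtain K where K: "compactin B K" "\<forall>x\<in>topspace X. r x \<notin> K \<longrightarrow> cmod (a x) < e / M'"
    using a \<open>e > 0\<close> M'(1) unfolding vanishes_along_def by (meson divide_pos_pos)
  have "cmod (k x * a x) < e" if "x \<in> topspace X" "r x \<notin> K" for x
  proof -
    have "cmod (k x * a x) \<le> M' * cmod (a x)"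
      using M'(2) that(1) by (simp add: norm_mult mult_right_mono)
    also have "\<dots> < e"
      using K(2) that M'(1) by (simp add: pos_less_divide_eq mult.commute)
    finally show ?thesis .
  qed
  then show "\<exists>K. compactin B K \<and> (\<forall>x\<in>topspace X. r x \<notin> K \<longrightarrow> cmod (k x * a x) < e)"
    using K(1) by blast
qed

lemma vanishes_along_add:
  assumes a: "vanishes_along X B r a" and b: "vanishes_along X B r b"
  shows "vanishes_along X B r (\<lambda>x. a x + b x)"
  unfolding vanishes_along_def
proof (intro allI impI)
  fix e :: real
  assume "e > 0"
  then obtain K1 K2 where
    K1: "compactin B K1" "\<forall>x\<in>topspace X. r x \<notin> K1 \<longrightarrow> cmod (a x) < e / 2" and
    K2: "compactin B K2" "\<forall>x\<in>topspace X. r x \<notin> K2 \<longrightarrow> cmod (b x) < e / 2"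
    using a b unfolding vanishes_along_def by (meson half_gt_zero)
  have "cmod (a x + b x) < e" if "x \<in> topspace X" "r x \<notin> K1 \<union> K2" for x
    using norm_triangle_ineq[of "a x" "b x"] K1(2) K2(2) that by fastforce
  then show "\<exists>K. compactin B K \<and> (\<forall>x\<in>topspace X. r x \<notin> K \<longrightarrow> cmod (a x + b x) < e)"
    using compactin_Un[OF K1(1) K2(1)] by blast
qed

lemma vanishes_along_uniform_limit:
  assumes "\<And>e. e > 0 \<Longrightarrow> \<exists>p. vanishes_along X B r p \<and> (\<forall>x\<in>topspace X. cmod (a x - p x) < e)"
  shows "vanishes_along X B r a"
  unfolding vanishes_along_def
proof (intro allI impI)
  fix e :: real
  assume "e > 0"
  then obtain p where p: "vanishes_along X B r p" "\<forall>x\<in>topspace X. cmod (a x - p x) < e / 2"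
    using assms half_gt_zero by blast
  then obtain K where K: "compactin B K" "\<forall>x\<in>topspace X. r x \<notin> K \<longrightarrow> cmod (p x) < e / 2"
    using \<open>e > 0\<close> unfolding vanishes_along_def by (meson half_gt_zero)
  have "cmod (a x) < e" if "x \<in> topspace X" "r x \<notin> K" for x
    using norm_triangle_ineq[of "a x - p x" "p x"] p(2) K(2) that by fastforce
  then show "\<exists>K. compactin B K \<and> (\<forall>x\<in>topspace X. r x \<notin> K \<longrightarrow> cmod (a x) < e)"
    using K(1) by blast
qed

lemma lin_span_HX_gens_vanishes_along:
  assumes "p \<in> lin_span (HX_gens X B r)" and r: "continuous_map X B r"
  shows "vanishes_along X B r p"
  using assms(1)
proof induction
  case zero
  then show ?case
    unfolding vanishes_along_def by (auto intro: exI[of _ "{}"])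
next
  case (base g)
  then obtain g' h where g: "g = (\<lambda>x. g' x * h (r x))" "g' \<in> Cb X" "h \<in> C0 B"
    unfolding HX_gens_def by blast
  obtain M where "\<forall>x\<in>topspace X. cmod (g' x) \<le> M"
    using Cb_bounded[OF g(2)] by blast
  then show ?case
    unfolding g(1) using vanishes_along_mult_bounded vanishes_along_C0[OF r g(3)] by blast
next
  case (add g k)
  then show ?case
    using vanishes_along_add by blast
next
  case (smult g c)
  then show ?case
    using vanishes_along_mult_bounded[of X B r g "\<lambda>x. c" "cmod c"] by simp
qed

lemma HX_vanishes_along:
  assumes a: "a \<in> HX X B r" and r: "continuous_map X B r"
  shows "vanishes_along X B r a"
proof (rule vanishes_along_uniform_limit)
  fix e :: real
  assume "e > 0"
  then obtain p where "p \<in> lin_span (HX_gens X B r)" "\<forall>x\<in>topspace X. cmod (a x - p x) < e"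
    using HX_approx[OF a] by blast
  then show "\<exists>p. vanishes_along X B r p \<and> (\<forall>x\<in>topspace X. cmod (a x - p x) < e)"
    using lin_span_HX_gens_vanishes_along[OF _ r] by blast
qed

subsection \<open>Characters of \<open>H\<^sub>X\<close>\<close>

lemma characters_add: "\<phi> \<in> characters A \<Longrightarrow> a \<in> A \<Longrightarrow> b \<in> A \<Longrightarrow> \<phi> (\<lambda>x. a x + b x) = \<phi> a + \<phi> b"
  unfolding characters_def by blast

lemma characters_mult: "\<phi> \<in> characters A \<Longrightarrow> a \<in> A \<Longrightarrow> b \<in> A \<Longrightarrow> \<phi> (\<lambda>x. a x * b x) = \<phi> a * \<phi> b"
  unfolding characters_def by blast

lemma characters_scale: "\<phi> \<in> characters A \<Longrightarrow> a \<in> A \<Longrightarrow> \<phi> (\<lambda>x. c * a x) = c * \<phi> a"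
  unfolding characters_def by blast

lemma characters_nonzero: "\<phi> \<in> characters A \<Longrightarrow> \<exists>a\<in>A. \<phi> a \<noteq> 0"
  unfolding characters_def by blast

lemma characters_extensional: "\<phi> \<in> characters A \<Longrightarrow> \<phi> \<in> extensional A"
  unfolding characters_def by blast

lemma character_unit:
  assumes "\<phi> \<in> characters (HX X B r)"
  shows "\<exists>u\<in>HX X B r. \<phi> u = 1"
proof -
  obtain a where a: "a \<in> HX X B r" "\<phi> a \<noteq> 0"
    using characters_nonzero[OF assms] by blast
  then have "\<phi> (\<lambda>x. (1 / \<phi> a) * a x) = 1"
    using characters_scale[OF assms a(1), of "1 / \<phi> a"] by simp
  then show ?thesis
    using HX_scale[OF a(1)] by blast
qed

lemma character_sum:
  assumes \<phi>: "\<phi> \<in> characters (HX X B r)" and "finite F" "\<forall>i\<in>F. t i \<in> HX X B r"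
  shows "(\<lambda>x. \<Sum>i\<in>F. t i x) \<in> HX X B r \<and> \<phi> (\<lambda>x. \<Sum>i\<in>F. t i x) = (\<Sum>i\<in>F. \<phi> (t i))"
  using assms(2,3)
proof (induction F rule: finite_induct)
  case empty
  obtain a where "a \<in> HX X B r"
    using characters_nonzero[OF \<phi>] by blast
  then show ?case
    using characters_scale[OF \<phi>, of a 0] HX_zero by simp
next
  case (insert j F)
  then show ?case
    using HX_add[of "t j" X B r "\<lambda>x. \<Sum>i\<in>F. t i x"] characters_add[OF \<phi>, of "t j" "\<lambda>x. \<Sum>i\<in>F. t i x"]
    by simp
qed

lemma HX_mult_divide_bounded_below:
  assumes u: "u \<in> HX X B r" and k: "continuous_map X euclidean k" "\<forall>x\<in>topspace X. cmod (k x) \<le> M"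
    and D: "continuous_map X euclideanreal D" "\<forall>x\<in>topspace X. c \<le> D x" "c > 0"
  shows "(\<lambda>x. u x * (k x / of_real (D x))) \<in> HX X B r"
proof (rule HX_mult_bounded[OF u])
  show "continuous_map X euclidean (\<lambda>x. k x / of_real (D x))"
    using D by (intro continuous_map_divide_field k(1) continuous_map_of_real) auto
  show "\<forall>x\<in>topspace X. cmod (k x / of_real (D x)) \<le> M / c"
  proof
    fix x
    assume "x \<in> topspace X"
    moreover have "0 \<le> M"
      using k(2) \<open>x \<in> topspace X\<close> by (meson norm_ge_zero order.trans)
    ultimately have "cmod (k x) / D x \<le> M / c"
      using k(2) D(2,3) by (intro frac_le) auto
    moreover have "\<bar>D x\<bar> = D x"
      using D(2,3) \<open>x \<in> topspace X\<close> by force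
    ultimately show "cmod (k x / of_real (D x)) \<le> M / c"
      by (simp add: norm_divide)
  qed
qed

lemma character_kills_deviation:
  assumes \<phi>: "\<phi> \<in> characters (HX X B r)" and g: "g \<in> HX X B r" and w: "w \<in> HX X B r"
  shows "(\<lambda>x. (g x - \<phi> g) * w x) \<in> HX X B r \<and> \<phi> (\<lambda>x. (g x - \<phi> g) * w x) = 0"
proof -
  have gw: "(\<lambda>x. g x * w x) \<in> HX X B r" and cw: "(\<lambda>x. - \<phi> g * w x) \<in> HX X B r"
    using HX_mult[OF g w] HX_scale[OF w] .
  have eq: "(\<lambda>x. (g x - \<phi> g) * w x) = (\<lambda>x. g x * w x + - \<phi> g * w x)"
    by (simp add: fun_eq_iff algebra_simps)
  have "\<phi> (\<lambda>x. g x * w x + - \<phi> g * w x) = \<phi> (\<lambda>x. g x * w x) + \<phi> (\<lambda>x. - \<phi> g * w x)"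
    by (rule characters_add[OF \<phi> gw cw])
  also have "\<dots> = \<phi> g * \<phi> w + - \<phi> g * \<phi> w"
    by (simp only: characters_mult[OF \<phi> g w] characters_scale[OF \<phi> w])
  finally show ?thesis
    unfolding eq using HX_add[OF gw cw] by simp
qed

lemma sum_mult_cnj_divide_norm_square:
  fixes v :: "'i \<Rightarrow> complex" and F :: "'i set"
  defines "S \<equiv> \<Sum>j\<in>F. (cmod (v j))\<^sup>2"
  assumes "S \<noteq> 0"
  shows "(\<Sum>i\<in>F. v i * (u * (cnj (v i) / of_real S))) = u"
proof -
  have summand: "v i * (u * (cnj (v i) / of_real S)) = u * of_real ((cmod (v i))\<^sup>2) / of_real S" for i
    by (simp only: complex_norm_square times_divide_eq_right mult_ac)
  have "(\<Sum>i\<in>F. v i * (u * (cnj (v i) / of_real S))) = u * of_real S / of_real S"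
    unfolding summand by (simp add: S_def sum_divide_distrib[symmetric] sum_distrib_left[symmetric])
  then show ?thesis
    using assms(2) by simp
qed

text \<open>If the points of \<open>X\<close> stayed uniformly away from \<open>\<phi>\<close> on finitely many \<open>g \<in> F\<close>, then with
  \<open>D = (\<Sum>g\<in>F. \<bar>g - \<phi> g\<bar>\<^sup>2) \<ge> c\<close> a unit \<open>u\<close> would decompose as
  \<open>u = (\<Sum>g\<in>F. (g - \<phi> g) * u * cnj (g - \<phi> g) / D)\<close>, a sum of elements of \<open>H\<^sub>X\<close> killed by \<open>\<phi>\<close>.\<close>
lemma character_deviation_not_bounded_below:
  assumes \<phi>: "\<phi> \<in> characters (HX X B r)" and F: "finite F" "F \<subseteq> HX X B r" and c: "c > 0"
    and D_ge: "\<forall>x\<in>topspace X. c \<le> (\<Sum>g\<in>F. (cmod (g x - \<phi> g))\<^sup>2)"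
  shows False
proof -
  obtain u where u: "u \<in> HX X B r" "\<phi> u = 1"
    using character_unit[OF \<phi>] by blast
  define D where "D x = (\<Sum>g\<in>F. (cmod (g x - \<phi> g))\<^sup>2)" for x
  define w where "w g x = u x * (cnj (g x - \<phi> g) / of_real (D x))" for g x
  define t where "t g x = (g x - \<phi> g) * w g x" for g x
  have g_Cb: "g \<in> Cb X" if "g \<in> F" for g
    using F(2) HX_Cb that by blast
  have D_cont: "continuous_map X euclideanreal D"
    unfolding D_def using g_Cb
    by (intro continuous_map_sum F(1) continuous_map_real_pow continuous_map_norm
        continuous_map_diff Cb_continuous continuous_map_canonical_const) auto
  have w: "w g \<in> HX X B r" if gF: "g \<in> F" for g
  proof -
    obtain M where "\<forall>x\<in>topspace X. cmod (g x) \<le> M"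
      using Cb_bounded[OF g_Cb[OF gF]] by blast
    then have "\<forall>x\<in>topspace X. cmod (cnj (g x - \<phi> g)) \<le> M + cmod (\<phi> g)"
      by (auto intro: order.trans[OF norm_triangle_ineq4])
    moreover have "continuous_map X euclidean (\<lambda>x. cnj (g x - \<phi> g))"
      by (intro continuous_map_cnj continuous_map_diff Cb_continuous[OF g_Cb[OF gF]]
          continuous_map_canonical_const)
    ultimately show ?thesis
      unfolding w_def using HX_mult_divide_bounded_below[OF u(1) _ _ D_cont] D_ge c by (simp add: D_def)
  qed
  have t: "t g \<in> HX X B r \<and> \<phi> (t g) = 0" if "g \<in> F" for g
    unfolding t_def using character_kills_deviation[OF \<phi> _ w] F(2) that by blast
  have "(\<lambda>x. \<Sum>g\<in>F. t g x) = u"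
  proof
    fix x
    show "(\<Sum>g\<in>F. t g x) = u x"
    proof (cases "x \<in> topspace X")
      case True
      then have "D x \<noteq> 0"
        using D_ge c by (auto simp: D_def)
      then show ?thesis
        unfolding t_def w_def D_def by (rule sum_mult_cnj_divide_norm_square)
    next
      case False
      then show ?thesis
        using Cb_outside[OF HX_Cb[OF u(1)]] by (simp add: t_def w_def)
    qed
  qed
  then have "\<phi> u = (\<Sum>g\<in>F. \<phi> (t g))"
    using character_sum[OF \<phi> F(1)] t by force
  then show False
    using t u(2) by simp
qed

lemma character_approx_by_point:
  assumes \<phi>: "\<phi> \<in> characters (HX X B r)" and F: "finite F" "F \<subseteq> HX X B r" and e: "e > 0"
  shows "\<exists>x\<in>topspace X. \<forall>g\<in>F. cmod (g x - \<phi> g) < e"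
proof (rule ccontr)
  assume none: "\<not> ?thesis"
  have "e\<^sup>2 \<le> (\<Sum>g\<in>F. (cmod (g x - \<phi> g))\<^sup>2)" if x: "x \<in> topspace X" for x
  proof -
    obtain g where g: "g \<in> F" "e \<le> cmod (g x - \<phi> g)"
      using none x by (meson not_less)
    then have "e\<^sup>2 \<le> (cmod (g x - \<phi> g))\<^sup>2"
      using e by (simp add: power_mono)
    also have "\<dots> \<le> (\<Sum>g\<in>F. (cmod (g x - \<phi> g))\<^sup>2)"
      using g(1) F(1) by (intro member_le_sum) auto
    finally show ?thesis .
  qed
  then show False
    using character_deviation_not_bounded_below[OF \<phi> F, of "e\<^sup>2"] e by simp
qed

subsection \<open>The spectrum\<close>

lemma product_topology_open_contains_finite_ball:
  fixes \<phi> :: "'i \<Rightarrow> 'b::metric_space"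
  assumes "openin (product_topology (\<lambda>_. euclidean) I) T" "\<phi> \<in> T"
  shows "\<exists>F e. finite F \<and> F \<subseteq> I \<and> e > 0 \<and>
           (\<forall>\<psi>\<in>extensional I. (\<forall>i\<in>F. dist (\<psi> i) (\<phi> i) < e) \<longrightarrow> \<psi> \<in> T)"
proof -
  obtain U where U: "finite {i \<in> I. U i \<noteq> topspace euclidean}" "\<forall>i\<in>I. openin euclidean (U i)"
    "\<phi> \<in> PiE I U" "PiE I U \<subseteq> T"
    using assms unfolding openin_product_topology_alt by blast
  define F where "F = {i \<in> I. U i \<noteq> UNIV}"
  have "\<exists>\<epsilon>>0. ball (\<phi> i) \<epsilon> \<subseteq> U i" if "i \<in> F" for i
  proof -
    have "open (U i)" "\<phi> i \<in> U i"
      using U(2,3) that by (auto simp: F_def PiE_iff)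
    then show ?thesis
      using open_contains_ball by blast
  qed
  then obtain \<epsilon> where \<epsilon>: "\<forall>i\<in>F. \<epsilon> i > 0 \<and> ball (\<phi> i) (\<epsilon> i) \<subseteq> U i"
    using bchoice[of F "\<lambda>i \<epsilon>. \<epsilon> > 0 \<and> ball (\<phi> i) \<epsilon> \<subseteq> U i"] by blast
  obtain e where e: "e > 0" "\<forall>i\<in>F. e \<le> \<epsilon> i"
    using finite_pos_lower_bound[of F \<epsilon>] U(1) \<epsilon> by (auto simp: F_def)
  have "\<psi> \<in> T" if "\<psi> \<in> extensional I" and near: "\<forall>i\<in>F. dist (\<psi> i) (\<phi> i) < e" for \<psi>
  proof -
    have "\<psi> i \<in> U i" if "i \<in> F" for i
    proof -
      have "dist (\<phi> i) (\<psi> i) < \<epsilon> i"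
        using e(2) near that by (metis dist_commute order_less_le_trans)
      then have "\<psi> i \<in> ball (\<phi> i) (\<epsilon> i)"
        by simp
      then show ?thesis
        using \<epsilon> that by blast
    qed
    then have "\<psi> \<in> PiE I U"
      using \<open>\<psi> \<in> extensional I\<close> by (auto simp: PiE_iff F_def)
    then show ?thesis
      using U(4) by blast
  qed
  then show ?thesis
    using U(1) e(1) by (intro exI[of _ F] exI[of _ e]) (auto simp: F_def)
qed

lemma topspace_rel_beta: "topspace (rel_beta X B r) = characters (HX X B r)"
  unfolding rel_beta_def spectrum_top_def topspace_subtopology topspace_product_topology
  by (auto simp: PiE_def dest: characters_extensional)

lemma continuous_map_rel_beta_eval:
  "g \<in> HX X B r \<Longrightarrow> continuous_map (rel_beta X B r) euclidean (\<lambda>\<psi>. \<psi> g)"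
  unfolding rel_beta_def spectrum_top_def
  by (rule continuous_map_from_subtopology[OF continuous_map_product_projection])

lemma Hausdorff_space_rel_beta: "Hausdorff_space (rel_beta X B r)"
  unfolding rel_beta_def spectrum_top_def
  by (intro Hausdorff_space_subtopology) (simp add: Hausdorff_space_product_topology)

context
  fixes X :: "'a topology" and B :: "'b topology" and r :: "'a \<Rightarrow> 'b"
  assumes r: "continuous_map X B r" and lc: "locally_compact_space B" "Hausdorff_space B"
begin

lemma rel_i_in_topspace:
  assumes x: "x \<in> topspace X"
  shows "rel_i X B r x \<in> topspace (rel_beta X B r)"
proof -
  have "r x \<in> topspace B"
    using continuous_map_funspace[OF r] x by blast
  then obtain h where h: "h \<in> C0 B" "h (r x) = 1"
    using C0_bump[OF lc openin_topspace] by blast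
  then have "\<exists>a\<in>HX X B r. rel_i X B r x a \<noteq> 0"
    using HX_C0[OF r h(1)] x by (intro bexI) (auto simp: rel_i_def)
  then show ?thesis
    unfolding topspace_rel_beta characters_def
  proof (intro CollectI conjI ballI allI)
    fix a b
    assume ab: "a \<in> HX X B r" "b \<in> HX X B r"
    show "rel_i X B r x (\<lambda>y. a y + b y) = rel_i X B r x a + rel_i X B r x b"
      using HX_add[OF ab] ab by (simp add: rel_i_def)
    show "rel_i X B r x (\<lambda>y. a y * b y) = rel_i X B r x a * rel_i X B r x b"
      using HX_mult[OF ab] ab by (simp add: rel_i_def)
  next
    fix c a
    assume "a \<in> HX X B r"
    then show "rel_i X B r x (\<lambda>y. c * a y) = c * rel_i X B r x a"
      using HX_scale[of a X B r c] by (simp add: rel_i_def)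
  qed (simp_all add: rel_i_def)
qed

lemma closure_of_rel_i_image:
  "rel_beta X B r closure_of (rel_i X B r ` topspace X) = topspace (rel_beta X B r)"
proof -
  have "\<phi> \<in> rel_beta X B r closure_of (rel_i X B r ` topspace X)"
    if \<phi>: "\<phi> \<in> characters (HX X B r)" for \<phi>
    unfolding in_closure_of topspace_rel_beta
  proof (intro conjI allI impI)
    fix W
    assume W: "\<phi> \<in> W \<and> openin (rel_beta X B r) W"
    then obtain T where T: "openin (product_topology (\<lambda>_. euclidean) (HX X B r)) T"
      "W = T \<inter> characters (HX X B r)"
      unfolding rel_beta_def spectrum_top_def openin_subtopology by blast
    have "\<phi> \<in> T"
      using W T(2) by blast
    obtain F e where F: "finite F" "F \<subseteq> HX X B r" "e > 0"
      and in_T: "\<forall>\<psi>\<in>extensional (HX X B r). (\<forall>g\<in>F. dist (\<psi> g) (\<phi> g) < e) \<longrightarrow> \<psi> \<in> T"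
      using product_topology_open_contains_finite_ball[OF T(1) \<open>\<phi> \<in> T\<close>] by blast
    obtain x where x: "x \<in> topspace X" "\<forall>g\<in>F. cmod (g x - \<phi> g) < e"
      using character_approx_by_point[OF \<phi> F] by blast
    have "\<forall>g\<in>F. dist (rel_i X B r x g) (\<phi> g) < e"
      using x(2) F(2) by (auto simp: rel_i_def dist_norm)
    moreover have "rel_i X B r x \<in> extensional (HX X B r)"
      by (simp add: rel_i_def)
    ultimately have "rel_i X B r x \<in> T"
      using in_T by blast
    then show "\<exists>y. y \<in> rel_i X B r ` topspace X \<and> y \<in> W"
      using T(2) rel_i_in_topspace[OF x(1)] x(1) unfolding topspace_rel_beta by blast
  qed (use \<phi> in blast)
  then show ?thesis
    using closure_of_subset_topspace[of "rel_beta X B r"] unfolding topspace_rel_beta by auto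
qed

end

subsection \<open>The projection to the base\<close>

definition lies_over :: "'a topology \<Rightarrow> 'b topology \<Rightarrow> ('a \<Rightarrow> 'b) \<Rightarrow> (('a \<Rightarrow> complex) \<Rightarrow> complex) \<Rightarrow> 'b \<Rightarrow> bool" where
  "lies_over X B r \<phi> b \<longleftrightarrow>
     b \<in> topspace B \<and> (\<forall>a\<in>HX X B r. \<forall>h\<in>C0 B. \<phi> (\<lambda>x. a x * h (r x)) = \<phi> a * h b)"

definition base_point :: "'a topology \<Rightarrow> 'b topology \<Rightarrow> ('a \<Rightarrow> 'b) \<Rightarrow> (('a \<Rightarrow> complex) \<Rightarrow> complex) \<Rightarrow> 'b" where
  "base_point X B r = restrict (\<lambda>\<phi>. THE b. lies_over X B r \<phi> b) (topspace (rel_beta X B r))"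

lemma lies_over_apply:
  "lies_over X B r \<phi> b \<Longrightarrow> a \<in> HX X B r \<Longrightarrow> h \<in> C0 B \<Longrightarrow> \<phi> (\<lambda>x. a x * h (r x)) = \<phi> a * h b"
  by (simp add: lies_over_def)

context
  fixes X :: "'a topology" and B :: "'b topology" and r :: "'a \<Rightarrow> 'b"
  assumes r: "continuous_map X B r" and lc: "locally_compact_space B" "Hausdorff_space B"
begin

lemma lies_over_unique:
  assumes \<phi>: "\<phi> \<in> characters (HX X B r)" and b: "lies_over X B r \<phi> b" and b': "lies_over X B r \<phi> b'"
  shows "b = b'"
proof (rule ccontr)
  assume "b \<noteq> b'"
  have "openin B (topspace B - {b'})"
    using b' lc(2) by (simp add: lies_over_def closedin_Hausdorff_singleton openin_diff)
  moreover have "b \<in> topspace B - {b'}"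
    using b \<open>b \<noteq> b'\<close> by (simp add: lies_over_def)
  ultimately obtain h where h: "h \<in> C0 B" "h b = 1" "\<forall>y\<in>topspace B - (topspace B - {b'}). h y = 0"
    using C0_bump[OF lc] by blast
  then have "h b' = 0"
    using b' by (simp add: lies_over_def)
  obtain u where u: "u \<in> HX X B r" "\<phi> u = 1"
    using character_unit[OF \<phi>] by blast
  have "h b = \<phi> (\<lambda>x. u x * h (r x))"
    using b u h(1) by (simp add: lies_over_def)
  also have "\<dots> = h b'"
    using b' u h(1) by (simp add: lies_over_def)
  finally show False
    using h(2) \<open>h b' = 0\<close> by simp
qed

lemma lies_over_rel_i:
  assumes x: "x \<in> topspace X"
  shows "lies_over X B r (rel_i X B r x) (r x)"
  unfolding lies_over_def
  using continuous_map_funspace[OF r] x HX_mult_C0[OF r] by (auto simp: rel_i_def)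

lemma deviating_C0_if_not_lies_over:
  assumes \<phi>: "\<phi> \<in> characters (HX X B r)" and u: "u \<in> HX X B r" "\<phi> u = 1" and b: "b \<in> topspace B"
    and not_over: "\<not> lies_over X B r \<phi> b"
  shows "\<exists>h. h \<in> C0 B \<and> \<phi> (\<lambda>x. u x * h (r x)) \<noteq> h b"
proof (rule ccontr)
  assume "\<nexists>h. h \<in> C0 B \<and> \<phi> (\<lambda>x. u x * h (r x)) \<noteq> h b"
  then have uh: "\<phi> (\<lambda>x. u x * h (r x)) = h b" if "h \<in> C0 B" for h
    using that by blast
  have "\<phi> (\<lambda>x. a x * h (r x)) = \<phi> a * h b" if a: "a \<in> HX X B r" and h: "h \<in> C0 B" for a h
  proof -
    have "\<phi> (\<lambda>x. a x * h (r x)) = \<phi> (\<lambda>x. a x * h (r x)) * \<phi> u"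
      using u(2) by simp
    also have "\<dots> = \<phi> (\<lambda>x. a x * (u x * h (r x)))"
      using characters_mult[OF \<phi> HX_mult_C0[OF r a h] u(1)] by (simp add: ac_simps)
    also have "\<dots> = \<phi> a * h b"
      using characters_mult[OF \<phi> a HX_mult_C0[OF r u(1) h]] uh[OF h] by simp
    finally show ?thesis .
  qed
  then show False
    using not_over b by (simp add: lies_over_def)
qed

text \<open>Cover the compact set outside of which a unit \<open>u\<close> is small by neighbourhoods on which some
  \<open>u * (h \<circ> r)\<close> deviates from its value under \<open>\<phi>\<close>; a point of \<open>X\<close> approximating \<open>\<phi>\<close> on all these
  finitely many functions cannot exist.\<close>
lemma lies_over_exists:
  assumes \<phi>: "\<phi> \<in> characters (HX X B r)"
  shows "\<exists>b. lies_over X B r \<phi> b"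
proof (rule ccontr)
  assume none: "\<nexists>b. lies_over X B r \<phi> b"
  obtain u where u: "u \<in> HX X B r" "\<phi> u = 1"
    using character_unit[OF \<phi>] by blast
  obtain K where K: "compactin B K" "\<forall>x\<in>topspace X. r x \<notin> K \<longrightarrow> cmod (u x) < 1 / 2"
    using HX_vanishes_along[OF u(1) r, unfolded vanishes_along_def, rule_format, of "1 / 2"] by auto
  have K_sub: "K \<subseteq> topspace B"
    using K(1) by (rule compactin_subset_topspace)
  have "\<forall>b\<in>K. \<exists>h. h \<in> C0 B \<and> \<phi> (\<lambda>x. u x * h (r x)) \<noteq> h b"
    using K_sub none by (intro ballI deviating_C0_if_not_lies_over[OF \<phi> u]) auto
  from bchoice[OF this] obtain h where h: "\<forall>b\<in>K. h b \<in> C0 B \<and> \<phi> (\<lambda>x. u x * h b (r x)) \<noteq> h b b"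
    by (rule exE)
  define c where "c b = \<phi> (\<lambda>x. u x * h b (r x))" for b
  have nbhd: "\<forall>b\<in>K. \<exists>U \<eta>. openin B U \<and> b \<in> U \<and> \<eta> > 0 \<and>
      (\<forall>y\<in>U. \<forall>z. cmod (z - 1) < \<eta> \<longrightarrow> \<eta> \<le> cmod (z * h b y - c b))"
    using h K_sub by (intro ballI C0_stays_away_near) (auto simp: c_def)
  obtain Bs U \<eta> e where Bs: "finite Bs" "Bs \<subseteq> K" "K \<subseteq> (\<Union>b\<in>Bs. U b)" and e: "e > 0"
    and away: "\<forall>b\<in>Bs. e \<le> \<eta> b \<and> (\<forall>y\<in>U b. \<forall>z. cmod (z - 1) < \<eta> b \<longrightarrow> \<eta> b \<le> cmod (z * h b y - c b))"
    using compactin_finite_subcover_uniform[OF K(1) nbhd] by blast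
  define G where "G = insert u ((\<lambda>b x. u x * h b (r x)) ` Bs)"
  have "finite G" "G \<subseteq> HX X B r"
    unfolding G_def using Bs u(1) h HX_mult_C0[OF r u(1)] by auto
  then obtain x where x: "x \<in> topspace X" "\<forall>g\<in>G. cmod (g x - \<phi> g) < min e (1 / 2)"
    using character_approx_by_point[OF \<phi>, of G "min e (1 / 2)"] e by auto
  then have ux: "cmod (u x - 1) < min e (1 / 2)"
    using u(2) by (simp add: G_def)
  moreover have "1 - cmod (u x) \<le> cmod (u x - 1)"
    using norm_triangle_ineq2[of 1 "u x"] by (simp add: norm_minus_commute)
  ultimately have "\<not> cmod (u x) < 1 / 2"
    by linarith
  then have "r x \<in> K"
    using K(2) x(1) by blast
  then obtain b where b: "b \<in> Bs" "r x \<in> U b"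
    using Bs(3) by blast
  then have "e \<le> \<eta> b" "\<eta> b \<le> cmod (u x * h b (r x) - c b)"
    using away ux by fastforce+
  moreover have "(\<lambda>x. u x * h b (r x)) \<in> G"
    unfolding G_def using b(1) by blast
  then have "cmod (u x * h b (r x) - c b) < e"
    using x(2) unfolding c_def by fastforce
  ultimately show False
    by linarith
qed

lemma base_point_lies_over:
  assumes "\<phi> \<in> topspace (rel_beta X B r)"
  shows "lies_over X B r \<phi> (base_point X B r \<phi>)"
proof -
  have \<phi>: "\<phi> \<in> characters (HX X B r)"
    using assms by (simp add: topspace_rel_beta)
  then obtain b where b: "lies_over X B r \<phi> b"
    using lies_over_exists by blast
  have "lies_over X B r \<phi> (THE b. lies_over X B r \<phi> b)"
  proof (rule theI[of _ b])
    fix b'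
    assume "lies_over X B r \<phi> b'"
    then show "b' = b"
      by (rule sym[OF lies_over_unique[OF \<phi> b]])
  qed (rule b)
  then show ?thesis
    using assms by (simp add: base_point_def)
qed

lemma base_point_eqI:
  assumes "\<phi> \<in> topspace (rel_beta X B r)" "lies_over X B r \<phi> b"
  shows "base_point X B r \<phi> = b"
  using lies_over_unique[OF _ base_point_lies_over[OF assms(1)] assms(2)] assms(1)
  by (simp add: topspace_rel_beta)

lemma base_point_rel_i: "x \<in> topspace X \<Longrightarrow> base_point X B r (rel_i X B r x) = r x"
  by (rule base_point_eqI[OF rel_i_in_topspace[OF r lc] lies_over_rel_i])

lemma continuous_map_base_point: "continuous_map (rel_beta X B r) B (base_point X B r)"
  unfolding continuous_map_def
proof (intro conjI allI impI)
  show "base_point X B r \<in> topspace (rel_beta X B r) \<rightarrow> topspace B"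
    using base_point_lies_over unfolding lies_over_def by blast
  fix V
  assume V: "openin B V"
  show "openin (rel_beta X B r) {\<phi> \<in> topspace (rel_beta X B r). base_point X B r \<phi> \<in> V}"
  proof (subst openin_subopen, intro ballI)
    fix \<phi>
    assume \<phi>: "\<phi> \<in> {\<phi> \<in> topspace (rel_beta X B r). base_point X B r \<phi> \<in> V}"
    then obtain h where h: "h \<in> C0 B" "h (base_point X B r \<phi>) = 1" "\<forall>y\<in>topspace B - V. h y = 0"
      using C0_bump[OF lc V] by blast
    obtain u where u: "u \<in> HX X B r" "\<phi> u = 1"
      using character_unit \<phi> unfolding topspace_rel_beta by blast
    define a where "a x = u x * h (r x)" for x
    have a: "a \<in> HX X B r"
      unfolding a_def[abs_def] using HX_mult_C0[OF r u(1) h(1)] .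
    define T where "T = {\<psi> \<in> topspace (rel_beta X B r). \<psi> a \<in> - {0}}"
    have "openin (rel_beta X B r) T"
      unfolding T_def
      by (rule openin_continuous_map_preimage[OF continuous_map_rel_beta_eval[OF a]]) (simp add: open_Compl)
    moreover have "\<phi> a = \<phi> u * h (base_point X B r \<phi>)"
      using base_point_lies_over[of \<phi>] \<phi> u(1) h(1) unfolding lies_over_def a_def by blast
    then have "\<phi> \<in> T"
      using \<phi> u(2) h(2) unfolding T_def by simp
    moreover have "base_point X B r \<psi> \<in> V" if "\<psi> \<in> T" for \<psi>
    proof -
      have "\<psi> a = \<psi> u * h (base_point X B r \<psi>)" "base_point X B r \<psi> \<in> topspace B"
        using base_point_lies_over u(1) h(1) that unfolding T_def lies_over_def a_def by auto
      then show ?thesis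
        using that h(3) unfolding T_def by auto
    qed
    ultimately show "\<exists>T. openin (rel_beta X B r) T \<and> \<phi> \<in> T \<and>
        T \<subseteq> {\<phi> \<in> topspace (rel_beta X B r). base_point X B r \<phi> \<in> V}"
      unfolding T_def by blast
  qed
qed

lemma rel_beta_map_eq_base_point: "rel_beta_map X B r = base_point X B r"
proof -
  let ?P = "\<lambda>q. continuous_map (rel_beta X B r) B q \<and> (\<forall>x\<in>topspace X. q (rel_i X B r x) = r x) \<and>
      q \<in> extensional (topspace (rel_beta X B r))"
  have ext: "base_point X B r \<in> extensional (topspace (rel_beta X B r))"
    by (simp add: base_point_def)
  then have P: "?P (base_point X B r)"
    using continuous_map_base_point base_point_rel_i by blast
  have "q = base_point X B r" if q: "?P q" for q
  proof (rule extensionalityI[OF _ ext])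
    show "q \<in> extensional (topspace (rel_beta X B r))"
      using q by blast
    fix \<phi>
    assume "\<phi> \<in> topspace (rel_beta X B r)"
    then have "\<phi> \<in> rel_beta X B r closure_of (rel_i X B r ` topspace X)"
      by (simp add: closure_of_rel_i_image[OF r lc])
    then show "q \<phi> = base_point X B r \<phi>"
      using lc(2) q continuous_map_base_point base_point_rel_i
      by (elim forall_in_closure_of_eq) auto
  qed
  then show ?thesis
    unfolding rel_beta_map_def using the_equality[of ?P, OF P] by blast
qed

end

subsection \<open>Functoriality\<close>

text \<open>Zero off the carrier, the normalisation built into \<^const>\<open>Cb\<close>.\<close>
definition pullback :: "'a topology \<Rightarrow> ('a \<Rightarrow> 'b) \<Rightarrow> ('b \<Rightarrow> complex) \<Rightarrow> 'a \<Rightarrow> complex" where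
  "pullback X f g = (\<lambda>x. if x \<in> topspace X then g (f x) else 0)"

definition induced_character ::
    "'a topology \<Rightarrow> ('a \<Rightarrow> 'b) \<Rightarrow> ('b \<Rightarrow> complex) set \<Rightarrow> (('a \<Rightarrow> complex) \<Rightarrow> complex) \<Rightarrow> ('b \<Rightarrow> complex) \<Rightarrow> complex" where
  "induced_character X f A \<phi> = restrict (\<lambda>g. \<phi> (pullback X f g)) A"

lemma pullback_add: "pullback X f (\<lambda>y. a y + b y) = (\<lambda>x. pullback X f a x + pullback X f b x)"
  by (simp add: pullback_def fun_eq_iff)

lemma pullback_mult: "pullback X f (\<lambda>y. a y * b y) = (\<lambda>x. pullback X f a x * pullback X f b x)"
  by (simp add: pullback_def fun_eq_iff)

lemma pullback_scale: "pullback X f (\<lambda>y. c * a y) = (\<lambda>x. c * pullback X f a x)"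
  by (simp add: pullback_def fun_eq_iff)

lemma pullback_Cb:
  assumes f: "continuous_map X Y f" and g: "g \<in> Cb Y"
  shows "pullback X f g \<in> Cb X"
proof -
  obtain M where "\<forall>y\<in>topspace Y. cmod (g y) \<le> M"
    using Cb_bounded[OF g] by blast
  then have "\<forall>x\<in>topspace X. cmod (g (f x)) \<le> M"
    using continuous_map_funspace[OF f] by blast
  moreover have "continuous_map X euclidean (\<lambda>x. g (f x))"
    using continuous_map_compose[OF f Cb_continuous[OF g]] by (simp add: o_def)
  ultimately show ?thesis
    unfolding pullback_def using Cb_restrict by blast
qed

context
  fixes X1 :: "'a topology" and X2 :: "'b topology" and B1 :: "'c topology" and B2 :: "'d topology"
    and f :: "'a \<Rightarrow> 'b" and r1 :: "'a \<Rightarrow> 'c" and r2 :: "'b \<Rightarrow> 'd" and f0 :: "'c \<Rightarrow> 'd"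
  assumes f: "continuous_map X1 X2 f" and r1: "continuous_map X1 B1 r1" and r2: "continuous_map X2 B2 r2"
    and f0: "continuous_map B1 B2 f0"
    and comm: "\<forall>x\<in>topspace X1. r2 (f x) = f0 (r1 x)"
    and lc1: "locally_compact_space B1" "Hausdorff_space B1"
    and lc2: "locally_compact_space B2" "Hausdorff_space B2"
    and proper: "proper_preimage B1 B2 f0"
begin

lemma pullback_mult_C0:
  "pullback X1 f (\<lambda>y. v y * h (r2 y)) = (\<lambda>x. pullback X1 f v x * h (f0 (r1 x)))"
  using comm by (auto simp: pullback_def fun_eq_iff)

lemma pullback_lin_span_HX_gens:
  assumes "p \<in> lin_span (HX_gens X2 B2 r2)"
  shows "pullback X1 f p \<in> lin_span (HX_gens X1 B1 r1)"
  using assms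
proof induction
  case zero
  then show ?case
    using lin_span.zero by (simp add: pullback_def)
next
  case (base g)
  then obtain g' h where g: "g = (\<lambda>y. g' y * h (r2 y))" "g' \<in> Cb X2" "h \<in> C0 B2"
    unfolding HX_gens_def by blast
  have "(\<lambda>x. pullback X1 f g' x * h (f0 (r1 x))) \<in> HX_gens X1 B1 r1"
    by (rule HX_gensI[OF pullback_Cb[OF f g(2)] C0_compose_proper[OF f0 proper g(3)]])
  then show ?case
    unfolding g(1) pullback_mult_C0 by (rule lin_span.base)
next
  case (add g k)
  then show ?case
    unfolding pullback_add using lin_span.add by blast
next
  case (smult g c)
  then show ?case
    unfolding pullback_scale using lin_span.smult by blast
qed

lemma pullback_HX:
  assumes g: "g \<in> HX X2 B2 r2"
  shows "pullback X1 f g \<in> HX X1 B1 r1"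
  unfolding HX_iff
proof (intro conjI allI impI)
  show "pullback X1 f g \<in> Cb X1"
    using pullback_Cb[OF f HX_Cb[OF g]] .
  fix e :: real
  assume "e > 0"
  then obtain p where p: "p \<in> lin_span (HX_gens X2 B2 r2)" "\<forall>y\<in>topspace X2. cmod (g y - p y) < e"
    using HX_approx[OF g] by blast
  then have "\<forall>x\<in>topspace X1. cmod (pullback X1 f g x - pullback X1 f p x) < e"
    using continuous_map_funspace[OF f] by (auto simp: pullback_def)
  then show "\<exists>q\<in>lin_span (HX_gens X1 B1 r1). \<forall>x\<in>topspace X1. cmod (pullback X1 f g x - q x) < e"
    using pullback_lin_span_HX_gens[OF p(1)] by blast
qed

lemma induced_character_lies_over:
  assumes "lies_over X1 B1 r1 \<phi> b"
  shows "lies_over X2 B2 r2 (induced_character X1 f (HX X2 B2 r2) \<phi>) (f0 b)"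
  unfolding lies_over_def
proof (intro conjI ballI)
  show "f0 b \<in> topspace B2"
    using assms continuous_map_funspace[OF f0] by (auto simp: lies_over_def)
  fix v h
  assume v: "v \<in> HX X2 B2 r2" and h: "h \<in> C0 B2"
  have "\<phi> (\<lambda>x. pullback X1 f v x * h (f0 (r1 x))) = \<phi> (pullback X1 f v) * h (f0 b)"
    by (rule lies_over_apply[OF assms pullback_HX[OF v] C0_compose_proper[OF f0 proper h]])
  then show "induced_character X1 f (HX X2 B2 r2) \<phi> (\<lambda>x. v x * h (r2 x)) =
      induced_character X1 f (HX X2 B2 r2) \<phi> v * h (f0 b)"
    using v HX_mult_C0[OF r2 v h] by (simp add: induced_character_def pullback_mult_C0)
qed

lemma induced_character_nonzero:
  assumes \<phi>: "\<phi> \<in> characters (HX X1 B1 r1)"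
  shows "\<exists>g\<in>HX X2 B2 r2. \<phi> (pullback X1 f g) \<noteq> 0"
proof -
  obtain b where b: "lies_over X1 B1 r1 \<phi> b"
    using lies_over_exists[OF r1 lc1 \<phi>] by blast
  then have "f0 b \<in> topspace B2"
    using continuous_map_funspace[OF f0] by (auto simp: lies_over_def)
  then obtain h where h: "h \<in> C0 B2" "h (f0 b) = 1"
    using C0_bump[OF lc2 openin_topspace] by blast
  define g where "g y = (if y \<in> topspace X2 then h (r2 y) else 0)" for y
  have g: "g \<in> HX X2 B2 r2"
    unfolding g_def using HX_C0[OF r2 h(1)] .
  obtain u where u: "u \<in> HX X1 B1 r1" "\<phi> u = 1"
    using character_unit[OF \<phi>] by blast
  have u_pullback: "(\<lambda>x. u x * pullback X1 f g x) = (\<lambda>x. u x * h (f0 (r1 x)))"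
    using Cb_outside[OF HX_Cb[OF u(1)]] comm continuous_map_funspace[OF f]
    by (auto simp: pullback_def g_def fun_eq_iff)
  have "\<phi> (pullback X1 f g) = \<phi> (\<lambda>x. u x * pullback X1 f g x)"
    using characters_mult[OF \<phi> u(1) pullback_HX[OF g]] u(2) by simp
  also have "\<dots> = \<phi> u * h (f0 b)"
    unfolding u_pullback by (rule lies_over_apply[OF b u(1) C0_compose_proper[OF f0 proper h(1)]])
  finally show ?thesis
    using g u(2) h(2) by (intro bexI[of _ g]) auto
qed

lemma induced_character_in_characters:
  assumes \<phi>: "\<phi> \<in> characters (HX X1 B1 r1)"
  shows "induced_character X1 f (HX X2 B2 r2) \<phi> \<in> characters (HX X2 B2 r2)"
  unfolding characters_def
proof (intro CollectI conjI ballI allI)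
  show "\<exists>a\<in>HX X2 B2 r2. induced_character X1 f (HX X2 B2 r2) \<phi> a \<noteq> 0"
    using induced_character_nonzero[OF \<phi>] by (auto simp: induced_character_def)
  fix a b
  assume ab: "a \<in> HX X2 B2 r2" "b \<in> HX X2 B2 r2"
  show "induced_character X1 f (HX X2 B2 r2) \<phi> (\<lambda>x. a x + b x) =
      induced_character X1 f (HX X2 B2 r2) \<phi> a + induced_character X1 f (HX X2 B2 r2) \<phi> b"
    using ab HX_add[OF ab] characters_add[OF \<phi> pullback_HX[OF ab(1)] pullback_HX[OF ab(2)]]
    by (simp add: induced_character_def pullback_add)
  show "induced_character X1 f (HX X2 B2 r2) \<phi> (\<lambda>x. a x * b x) =
      induced_character X1 f (HX X2 B2 r2) \<phi> a * induced_character X1 f (HX X2 B2 r2) \<phi> b"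
    using ab HX_mult[OF ab] characters_mult[OF \<phi> pullback_HX[OF ab(1)] pullback_HX[OF ab(2)]]
    by (simp add: induced_character_def pullback_mult)
next
  fix c a
  assume a: "a \<in> HX X2 B2 r2"
  show "induced_character X1 f (HX X2 B2 r2) \<phi> (\<lambda>x. c * a x) = c * induced_character X1 f (HX X2 B2 r2) \<phi> a"
    using a HX_scale[OF a] characters_scale[OF \<phi> pullback_HX[OF a]]
    by (simp add: induced_character_def pullback_scale)
qed (simp add: induced_character_def)

lemma continuous_map_induced_character:
  "continuous_map (rel_beta X1 B1 r1) (rel_beta X2 B2 r2) (induced_character X1 f (HX X2 B2 r2))"
  unfolding rel_beta_def[of X2] spectrum_top_def continuous_map_in_subtopology
proof
  show "continuous_map (rel_beta X1 B1 r1) (product_topology (\<lambda>_. euclidean) (HX X2 B2 r2))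
      (induced_character X1 f (HX X2 B2 r2))"
    unfolding continuous_map_componentwise
  proof (intro conjI ballI)
    fix g
    assume "g \<in> HX X2 B2 r2"
    then show "continuous_map (rel_beta X1 B1 r1) euclidean (\<lambda>\<phi>. induced_character X1 f (HX X2 B2 r2) \<phi> g)"
      using continuous_map_rel_beta_eval[OF pullback_HX] by (simp add: induced_character_def)
  qed (auto simp: induced_character_def)
  show "induced_character X1 f (HX X2 B2 r2) \<in> topspace (rel_beta X1 B1 r1) \<rightarrow> characters (HX X2 B2 r2)"
    using induced_character_in_characters by (auto simp: topspace_rel_beta)
qed

lemma induced_character_rel_i:
  assumes x: "x \<in> topspace X1"
  shows "induced_character X1 f (HX X2 B2 r2) (rel_i X1 B1 r1 x) = rel_i X2 B2 r2 (f x)"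
  using x pullback_HX by (auto simp: induced_character_def rel_i_def pullback_def fun_eq_iff)

lemma rel_beta_map_induced_character:
  assumes p: "p \<in> topspace (rel_beta X1 B1 r1)"
  shows "rel_beta_map X2 B2 r2 (induced_character X1 f (HX X2 B2 r2) p) = f0 (rel_beta_map X1 B1 r1 p)"
proof -
  have "induced_character X1 f (HX X2 B2 r2) p \<in> topspace (rel_beta X2 B2 r2)"
    using induced_character_in_characters p by (simp add: topspace_rel_beta)
  moreover have "lies_over X2 B2 r2 (induced_character X1 f (HX X2 B2 r2) p) (f0 (rel_beta_map X1 B1 r1 p))"
    using induced_character_lies_over base_point_lies_over[OF r1 lc1 p]
    by (simp add: rel_beta_map_eq_base_point[OF r1 lc1])
  ultimately show ?thesis
    using base_point_eqI[OF r2 lc2] by (simp add: rel_beta_map_eq_base_point[OF r2 lc2])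
qed

lemma induced_character_unique:
  assumes g: "continuous_map (rel_beta X1 B1 r1) (rel_beta X2 B2 r2) g"
    and gi: "\<forall>x\<in>topspace X1. g (rel_i X1 B1 r1 x) = rel_i X2 B2 r2 (f x)"
    and p: "p \<in> topspace (rel_beta X1 B1 r1)"
  shows "g p = induced_character X1 f (HX X2 B2 r2) p"
proof (rule forall_in_closure_of_eq[OF _ Hausdorff_space_rel_beta g continuous_map_induced_character])
  show "p \<in> rel_beta X1 B1 r1 closure_of (rel_i X1 B1 r1 ` topspace X1)"
    using p by (simp add: closure_of_rel_i_image[OF r1 lc1])
  show "g y = induced_character X1 f (HX X2 B2 r2) y" if "y \<in> rel_i X1 B1 r1 ` topspace X1" for y
    using that gi induced_character_rel_i by auto
qed

end

theorem lemma4p13: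
  fixes X1 :: "'a topology" and X2 :: "'b topology" and B1 :: "'c topology" and B2 :: "'d topology"
    and f :: "'a \<Rightarrow> 'b" and r1 :: "'a \<Rightarrow> 'c" and r2 :: "'b \<Rightarrow> 'd" and f0 :: "'c \<Rightarrow> 'd"
  assumes "continuous_map X1 X2 f" and "continuous_map X1 B1 r1" and "continuous_map X2 B2 r2"
    and "continuous_map B1 B2 f0"
    and "\<forall>x\<in>topspace X1. r2 (f x) = f0 (r1 x)"
    and "locally_compact_space B1" and "Hausdorff_space B1"
    and "locally_compact_space B2" and "Hausdorff_space B2"
    and "proper_preimage B1 B2 f0"
  shows "\<exists>ft. (continuous_map (rel_beta X1 B1 r1) (rel_beta X2 B2 r2) ft \<and>
              (\<forall>x\<in>topspace X1. ft (rel_i X1 B1 r1 x) = rel_i X2 B2 r2 (f x)) \<and>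
              (\<forall>p\<in>topspace (rel_beta X1 B1 r1).
                  rel_beta_map X2 B2 r2 (ft p) = f0 (rel_beta_map X1 B1 r1 p))) \<and>
           (\<forall>g. continuous_map (rel_beta X1 B1 r1) (rel_beta X2 B2 r2) g \<and>
              (\<forall>x\<in>topspace X1. g (rel_i X1 B1 r1 x) = rel_i X2 B2 r2 (f x)) \<and>
              (\<forall>p\<in>topspace (rel_beta X1 B1 r1).
                  rel_beta_map X2 B2 r2 (g p) = f0 (rel_beta_map X1 B1 r1 p))
              \<longrightarrow> (\<forall>p\<in>topspace (rel_beta X1 B1 r1). g p = ft p))"
proof (rule exI[of _ "induced_character X1 f (HX X2 B2 r2)"], intro conjI allI impI ballI)
  let ?F = "induced_character X1 f (HX X2 B2 r2)"
  show "continuous_map (rel_beta X1 B1 r1) (rel_beta X2 B2 r2) ?F"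
    by (rule continuous_map_induced_character[OF assms])
  show "?F (rel_i X1 B1 r1 x) = rel_i X2 B2 r2 (f x)" if "x \<in> topspace X1" for x
    by (rule induced_character_rel_i[OF assms that])
  show "rel_beta_map X2 B2 r2 (?F p) = f0 (rel_beta_map X1 B1 r1 p)"
    if "p \<in> topspace (rel_beta X1 B1 r1)" for p
    by (rule rel_beta_map_induced_character[OF assms that])
  show "g p = ?F p"
    if "continuous_map (rel_beta X1 B1 r1) (rel_beta X2 B2 r2) g \<and>
        (\<forall>x\<in>topspace X1. g (rel_i X1 B1 r1 x) = rel_i X2 B2 r2 (f x)) \<and>
        (\<forall>p\<in>topspace (rel_beta X1 B1 r1). rel_beta_map X2 B2 r2 (g p) = f0 (rel_beta_map X1 B1 r1 p))"
      and "p \<in> topspace (rel_beta X1 B1 r1)" for g p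
    using induced_character_unique[OF assms] that by blast
qed


end
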